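(* Let $(M^4,g)$ be a Riemannian manifold with an almost Hermitian structure $J$, a skew-symmetric endomorphism field $A$ and a vector field $\eta$ with $0<\rho:=|\eta|<1/2$; set $f:=\sqrt{1-4\rho^2}$ and $C(X,Y):=(\nabla_XA)(Y)-(\nabla_YA)(X)$. Assume $$(\nabla_YJ)(X)=\frac4{f-1}\,X\lrcorner\big(J\eta\wedge AY+\eta\wedge JAY\big)\quad\text{and}\quad\nabla_X\eta=fAX$$ for all $X,Y$. Then for all $X,Y$: \begin{align*} &g(C(X,Y),\eta)=0,\\ &R(X,Y)\eta=fC(X,Y)-4\,\eta\lrcorner(AX\wedge AY),\\ &R(X,Y)J\eta=-JC(X,Y)+\frac4{f-1}\,g(C(X,Y),J\eta)\,\eta-4\,J\eta\lrcorner(AX\wedge AY). \end{align*}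
   Context: $R(X,Y)=[\nabla_X,\nabla_Y]-\nabla_{[X,Y]}$. An almost Hermitian structure is a $g$-orthogonal almost complex structure. For vectors $X,a,b$, $X\lrcorner(a\wedge b)=g(X,a)b-g(X,b)a$. *)

theory Defs
  imports "HOL-Analysis.Analysis"
begin

text \<open>Local model: the manifold is (a chart) an open set U of a 4-dimensional
Euclidean space 'a; the Riemannian metric is a smooth field of inner products
g p :: 'a => 'a => real, p in U.\<close>

definition dderiv :: "'a::euclidean_space \<Rightarrow> ('a \<Rightarrow> 'b::real_normed_vector) \<Rightarrow> ('a \<Rightarrow> 'b)" where
  "dderiv v F = (\<lambda>p. frechet_derivative F (at p) v)"

definition smooth_on :: "'a::euclidean_space set \<Rightarrow> ('a \<Rightarrow> 'b::real_normed_vector) \<Rightarrow> bool" where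
  "smooth_on U F \<longleftrightarrow> (\<forall>vs. fold dderiv vs F differentiable_on U)"

definition riemannian_metric :: "'a::euclidean_space set \<Rightarrow> ('a \<Rightarrow> 'a \<Rightarrow> 'a \<Rightarrow> real) \<Rightarrow> bool" where
  "riemannian_metric U g \<longleftrightarrow>
     (\<forall>p\<in>U. bilinear (g p) \<and> (\<forall>u v. g p u v = g p v u) \<and> (\<forall>u. u \<noteq> 0 \<longrightarrow> g p u u > 0))
     \<and> (\<forall>u v. smooth_on U (\<lambda>p. g p u v))"

definition smooth_vf :: "'a::euclidean_space set \<Rightarrow> ('a \<Rightarrow> 'a) \<Rightarrow> bool" where
  "smooth_vf U X \<longleftrightarrow> smooth_on U X"

definition smooth_endo :: "'a::euclidean_space set \<Rightarrow> ('a \<Rightarrow> 'a \<Rightarrow> 'a) \<Rightarrow> bool" where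
  "smooth_endo U A \<longleftrightarrow> (\<forall>p\<in>U. linear (A p)) \<and> (\<forall>v. smooth_on U (\<lambda>p. A p v))"

text \<open>Koszul formula in coordinates: 2 g(Gamma(u,v),z) = du g(v,z) + dv g(u,z) - dz g(u,v).\<close>
definition christoffel :: "('a::euclidean_space \<Rightarrow> 'a \<Rightarrow> 'a \<Rightarrow> real) \<Rightarrow> 'a \<Rightarrow> 'a \<Rightarrow> 'a \<Rightarrow> 'a" where
  "christoffel g p u v = (THE w. \<forall>z. g p w z =
      (dderiv u (\<lambda>q. g q v z) p + dderiv v (\<lambda>q. g q u z) p - dderiv z (\<lambda>q. g q u v) p) / 2)"

definition nabla :: "('a::euclidean_space \<Rightarrow> 'a \<Rightarrow> 'a \<Rightarrow> real) \<Rightarrow> ('a \<Rightarrow> 'a) \<Rightarrow> ('a \<Rightarrow> 'a) \<Rightarrow> ('a \<Rightarrow> 'a)" where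
  "nabla g X Y = (\<lambda>p. frechet_derivative Y (at p) (X p) + christoffel g p (X p) (Y p))"

definition lie :: "('a::euclidean_space \<Rightarrow> 'a) \<Rightarrow> ('a \<Rightarrow> 'a) \<Rightarrow> ('a \<Rightarrow> 'a)" where
  "lie X Y = (\<lambda>p. frechet_derivative Y (at p) (X p) - frechet_derivative X (at p) (Y p))"

definition curv :: "('a::euclidean_space \<Rightarrow> 'a \<Rightarrow> 'a \<Rightarrow> real) \<Rightarrow> ('a \<Rightarrow> 'a) \<Rightarrow> ('a \<Rightarrow> 'a) \<Rightarrow> ('a \<Rightarrow> 'a) \<Rightarrow> ('a \<Rightarrow> 'a)" where
  "curv g X Y Z = (\<lambda>p. nabla g X (nabla g Y Z) p - nabla g Y (nabla g X Z) p - nabla g (lie X Y) Z p)"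

definition app :: "('a \<Rightarrow> 'a \<Rightarrow> 'a) \<Rightarrow> ('a \<Rightarrow> 'a) \<Rightarrow> ('a \<Rightarrow> 'a)" where
  "app A Y = (\<lambda>p. A p (Y p))"

definition nabla_endo :: "('a::euclidean_space \<Rightarrow> 'a \<Rightarrow> 'a \<Rightarrow> real) \<Rightarrow> ('a \<Rightarrow> 'a) \<Rightarrow> ('a \<Rightarrow> 'a \<Rightarrow> 'a) \<Rightarrow> ('a \<Rightarrow> 'a) \<Rightarrow> ('a \<Rightarrow> 'a)" where
  "nabla_endo g X A Y = (\<lambda>p. nabla g X (app A Y) p - A p (nabla g X Y p))"

text \<open>Interior product X _| (a /\ b) = g(X,a) b - g(X,b) a at a point.\<close>
definition contr :: "('a::real_vector \<Rightarrow> 'a \<Rightarrow> real) \<Rightarrow> 'a \<Rightarrow> 'a \<Rightarrow> 'a \<Rightarrow> 'a" where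
  "contr gp x a b = gp x a *\<^sub>R b - gp x b *\<^sub>R a"

end

theory Submission
  imports Defs
begin

(* The first identity is d(df) = 0 in disguise. Metric compatibility and nabla eta = f A give
   d |eta|^2 = 2 f g(A., eta), hence df = -4 g(A., eta) because f = sqrt (1 - 4 |eta|^2). The
   symmetry of second derivatives, X(Yf) - Y(Xf) = [X,Y]f, then says g(C(X,Y), eta) = 0, since
   C(X,Y) = nabla_X (AY) - nabla_Y (AX) - A[X,Y] for the torsion-free connection.

   Both curvature identities come from one computation: if nabla_Z V = B(AZ) for all Z and
   nabla_X (B W) = B(nabla_X W) + DB(AX, W), then R(X,Y)V = B(C(X,Y)) + DB(AX,AY) - DB(AY,AX).
   For V = eta take B = f and DB(a,w) = -4 g(a,eta) w. For V = J eta the hypothesis on nabla J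
   gives nabla_Z (J eta) = W(AZ) with W v = -Jv - k g(eta,v) J eta - k g(eta,Jv) eta, where
   k = 4/(f-1) satisfies k |eta|^2 + f = -1. Then g(C,eta) = 0 reduces W(C) to the first two terms
   of the claim, and the antisymmetrised DB collapses to -4 J eta _| (AX wedge AY) by k (f-1) = 4
   and k |eta|^2 + f = -1. *)

section \<open>Derivatives and coordinate expansions\<close>

lemma frechet_derivative_cong_open:
  assumes "open U" "p \<in> U" "\<And>q. q \<in> U \<Longrightarrow> F q = G q"
  shows "frechet_derivative F (at p) = frechet_derivative G (at p)"
proof -
  have "(F has_derivative D) (at p) \<longleftrightarrow> (G has_derivative D) (at p)" for D
    using has_derivative_transform_within_open[of F D p UNIV U G]
      has_derivative_transform_within_open[of G D p UNIV U F] assms by auto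
  then show ?thesis unfolding frechet_derivative_def by simp
qed

lemma dderiv_cong_open:
  assumes "open U" "p \<in> U" "\<And>q. q \<in> U \<Longrightarrow> F q = G q"
  shows "dderiv v F p = dderiv v G p"
  unfolding dderiv_def using frechet_derivative_cong_open[OF assms] by simp

lemma dderiv_eq:
  assumes "(F has_derivative D) (at p)"
  shows "dderiv v F p = D v"
  unfolding dderiv_def frechet_derivative_at[OF assms, symmetric] ..

lemma differentiable_on_cong_open:
  assumes "open U" "\<And>q. q \<in> U \<Longrightarrow> F q = G q" "F differentiable_on U"
  shows "G differentiable_on U"
  using assms has_derivative_transform_within_open[of F _ _ UNIV U G]
  unfolding differentiable_on_eq_differentiable_at[OF assms(1)] differentiable_def by metis

lemma bilinear_has_derivative_frechet:
  assumes "bounded_bilinear pr" "F differentiable (at q)" "G differentiable (at q)"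
  shows "((\<lambda>q. pr (F q) (G q)) has_derivative
           (\<lambda>h. pr (F q) (frechet_derivative G (at q) h) + pr (frechet_derivative F (at q) h) (G q))) (at q)"
  using bounded_bilinear.FDERIV[OF assms(1) assms(2,3)[unfolded frechet_derivative_works]] .

lemma differentiable_on_bilinear:
  assumes U: "open U" and pr: "bounded_bilinear pr"
    and F: "F differentiable_on U" and G: "G differentiable_on U"
  shows "(\<lambda>q. pr (F q) (G q)) differentiable_on U"
  unfolding differentiable_on_eq_differentiable_at[OF U]
proof
  fix q
  assume "q \<in> U"
  then have "F differentiable (at q)" "G differentiable (at q)"
    using F G U differentiable_on_eq_differentiable_at by blast+
  then show "(\<lambda>q. pr (F q) (G q)) differentiable (at q)"
    by (rule differentiableI[OF bilinear_has_derivative_frechet[OF pr]])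
qed

lemma linear_eq_sum_Basis:
  assumes "linear L"
  shows "L x = (\<Sum>b\<in>Basis. (x \<bullet> b) *\<^sub>R L b)"
proof -
  have "L x = L (\<Sum>b\<in>Basis. (x \<bullet> b) *\<^sub>R b)" by (simp add: euclidean_representation)
  also have "\<dots> = (\<Sum>b\<in>Basis. (x \<bullet> b) *\<^sub>R L b)"
    using assms by (simp add: linear_sum linear_scale)
  finally show ?thesis .
qed

lemma bilinear_eq_sum_Basis:
  fixes B :: "'a::euclidean_space \<Rightarrow> 'a \<Rightarrow> real"
  assumes "bilinear B"
  shows "B y z = (\<Sum>i\<in>Basis. \<Sum>j\<in>Basis. (y \<bullet> i) * (z \<bullet> j) * B i j)"
proof -
  have lin: "linear (\<lambda>y. B y z)" "linear (B i)" for i z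
    using assms unfolding bilinear_def by blast+
  have "B y z = (\<Sum>i\<in>Basis. (y \<bullet> i) * B i z)"
    using linear_eq_sum_Basis[OF lin(1), of y] by simp
  also have "\<dots> = (\<Sum>i\<in>Basis. (y \<bullet> i) * (\<Sum>j\<in>Basis. (z \<bullet> j) * B i j))"
  proof -
    have "B i z = (\<Sum>j\<in>Basis. (z \<bullet> j) * B i j)" for i
      using linear_eq_sum_Basis[OF lin(2)[of i], of z] by simp
    then show ?thesis by simp
  qed
  finally show ?thesis by (simp add: sum_distrib_left mult.assoc)
qed

lemma bilinear_sum_Basis:
  fixes c :: "'a::euclidean_space \<Rightarrow> 'a \<Rightarrow> real"
  shows "bilinear (\<lambda>y z. \<Sum>i\<in>Basis. \<Sum>j\<in>Basis. (y \<bullet> i) * (z \<bullet> j) * c i j)"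
  unfolding bilinear_def
proof (intro conjI allI linearI)
  show "(\<Sum>i\<in>Basis. \<Sum>j\<in>Basis. (y \<bullet> i) * ((z1 + z2) \<bullet> j) * c i j)
    = (\<Sum>i\<in>Basis. \<Sum>j\<in>Basis. (y \<bullet> i) * (z1 \<bullet> j) * c i j)
      + (\<Sum>i\<in>Basis. \<Sum>j\<in>Basis. (y \<bullet> i) * (z2 \<bullet> j) * c i j)" for y z1 z2
    by (simp add: sum.distrib algebra_simps)
  show "(\<Sum>i\<in>Basis. \<Sum>j\<in>Basis. ((y1 + y2) \<bullet> i) * (z \<bullet> j) * c i j)
    = (\<Sum>i\<in>Basis. \<Sum>j\<in>Basis. (y1 \<bullet> i) * (z \<bullet> j) * c i j)
      + (\<Sum>i\<in>Basis. \<Sum>j\<in>Basis. (y2 \<bullet> i) * (z \<bullet> j) * c i j)" for y1 y2 z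
    by (simp add: sum.distrib algebra_simps)
  show "(\<Sum>i\<in>Basis. \<Sum>j\<in>Basis. (y \<bullet> i) * ((r *\<^sub>R z) \<bullet> j) * c i j)
    = r *\<^sub>R (\<Sum>i\<in>Basis. \<Sum>j\<in>Basis. (y \<bullet> i) * (z \<bullet> j) * c i j)" for y z r
    by (simp add: sum_distrib_left algebra_simps)
  show "(\<Sum>i\<in>Basis. \<Sum>j\<in>Basis. ((r *\<^sub>R y) \<bullet> i) * (z \<bullet> j) * c i j)
    = r *\<^sub>R (\<Sum>i\<in>Basis. \<Sum>j\<in>Basis. (y \<bullet> i) * (z \<bullet> j) * c i j)" for y z r
    by (simp add: sum_distrib_left algebra_simps)
qed

section \<open>Smooth maps\<close>

(* smooth_on bounds all orders at once; bounding the order makes closure properties provable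
   by induction. *)
fun iter_differentiable_on :: "nat \<Rightarrow> 'a::euclidean_space set \<Rightarrow> ('a \<Rightarrow> 'b::real_normed_vector) \<Rightarrow> bool" where
  "iter_differentiable_on 0 U F \<longleftrightarrow> F differentiable_on U"
| "iter_differentiable_on (Suc n) U F \<longleftrightarrow>
     F differentiable_on U \<and> (\<forall>v. iter_differentiable_on n U (dderiv v F))"

lemma iter_differentiable_on_iff_fold:
  "iter_differentiable_on n U F \<longleftrightarrow> (\<forall>vs. length vs \<le> n \<longrightarrow> fold dderiv vs F differentiable_on U)"
proof (induction n arbitrary: F)
  case 0
  then show ?case by simp
next
  case (Suc n)
  show ?case
  proof
    assume h: "iter_differentiable_on (Suc n) U F"
    show "\<forall>vs. length vs \<le> Suc n \<longrightarrow> fold dderiv vs F differentiable_on U"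
    proof (intro allI impI)
      fix vs :: "'a list"
      assume "length vs \<le> Suc n"
      then show "fold dderiv vs F differentiable_on U"
        using h Suc.IH by (cases vs) auto
    qed
  next
    assume fold: "\<forall>vs. length vs \<le> Suc n \<longrightarrow> fold dderiv vs F differentiable_on U"
    have "fold dderiv vs (dderiv v F) differentiable_on U" if "length vs \<le> n" for v vs
      using fold[rule_format, of "v # vs"] that by simp
    then show "iter_differentiable_on (Suc n) U F"
      using fold[rule_format, of "[]"] Suc.IH by simp
  qed
qed

lemma smooth_on_iff_iter_differentiable_on: "smooth_on U F \<longleftrightarrow> (\<forall>n. iter_differentiable_on n U F)"
  unfolding smooth_on_def iter_differentiable_on_iff_fold by (metis le_refl)

lemma iter_differentiable_on_Suc_imp: "iter_differentiable_on (Suc n) U F \<Longrightarrow> iter_differentiable_on n U F"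
  by (induction n arbitrary: F) auto

lemma iter_differentiable_on_cong:
  assumes "open U" "\<And>q. q \<in> U \<Longrightarrow> F q = G q" "iter_differentiable_on n U F"
  shows "iter_differentiable_on n U G"
  using assms(2,3)
proof (induction n arbitrary: F G)
  case 0
  then show ?case using differentiable_on_cong_open[OF assms(1), of F G] by simp
next
  case (Suc n)
  have "dderiv v F q = dderiv v G q" if "q \<in> U" for v q
    using dderiv_cong_open[OF assms(1) that Suc.prems(1)] .
  then have "iter_differentiable_on n U (dderiv v G)" for v
    using Suc.IH[of "dderiv v F" "dderiv v G"] Suc.prems(2) by simp
  moreover have "G differentiable_on U"
    using differentiable_on_cong_open[OF assms(1) Suc.prems(1)] Suc.prems(2) by simp
  ultimately show ?case by simp
qed

lemma iter_differentiable_on_add: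
  assumes U: "open U"
  shows "iter_differentiable_on n U F \<Longrightarrow> iter_differentiable_on n U G \<Longrightarrow>
         iter_differentiable_on n U (\<lambda>q. F q + G q)"
proof (induction n arbitrary: F G)
  case 0
  then show ?case by simp
next
  case (Suc n)
  have eq: "dderiv v (\<lambda>q. F q + G q) q = dderiv v F q + dderiv v G q" if "q \<in> U" for v q
  proof -
    have diff: "F differentiable (at q)" "G differentiable (at q)"
      using Suc.prems that U by (auto simp: differentiable_on_eq_differentiable_at)
    show ?thesis
      using dderiv_eq[OF has_derivative_add[OF diff[unfolded frechet_derivative_works]]]
      by (simp add: dderiv_def)
  qed
  have "iter_differentiable_on n U (dderiv v (\<lambda>q. F q + G q))" for v
  proof (rule iter_differentiable_on_cong[OF U])
    show "iter_differentiable_on n U (\<lambda>q. dderiv v F q + dderiv v G q)"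
      using Suc by simp
  qed (simp add: eq)
  then show ?case
    using Suc.prems by simp
qed

lemma iter_differentiable_on_bilinear:
  assumes U: "open U" and pr: "bounded_bilinear pr"
  shows "iter_differentiable_on n U F \<Longrightarrow> iter_differentiable_on n U G \<Longrightarrow>
         iter_differentiable_on n U (\<lambda>q. pr (F q) (G q))"
proof (induction n arbitrary: F G)
  case 0
  then show ?case using differentiable_on_bilinear[OF U pr] by simp
next
  case (Suc n)
  have eq: "dderiv v (\<lambda>q. pr (F q) (G q)) q = pr (F q) (dderiv v G q) + pr (dderiv v F q) (G q)"
    if "q \<in> U" for v q
  proof -
    have "F differentiable (at q)" "G differentiable (at q)"
      using Suc.prems that U differentiable_on_eq_differentiable_at by auto
    from dderiv_eq[OF bilinear_has_derivative_frechet[OF pr this]]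
    show ?thesis by (simp add: dderiv_def)
  qed
  have lower: "iter_differentiable_on n U F" "iter_differentiable_on n U G"
    using Suc.prems iter_differentiable_on_Suc_imp by blast+
  have "iter_differentiable_on n U (dderiv v (\<lambda>q. pr (F q) (G q)))" for v
  proof (rule iter_differentiable_on_cong[OF U])
    have "iter_differentiable_on n U (dderiv v F)" "iter_differentiable_on n U (dderiv v G)"
      using Suc.prems by simp_all
    then show "iter_differentiable_on n U (\<lambda>q. pr (F q) (dderiv v G q) + pr (dderiv v F q) (G q))"
      using lower by (intro iter_differentiable_on_add[OF U] Suc.IH)
  qed (simp add: eq)
  then show ?case
    using Suc.prems differentiable_on_bilinear[OF U pr] by simp
qed

lemma smooth_on_dderiv: "smooth_on U F \<Longrightarrow> smooth_on U (dderiv v F)"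
  unfolding smooth_on_iff_iter_differentiable_on by (metis iter_differentiable_on.simps(2))

lemma smooth_on_imp_differentiable_at:
  "smooth_on U F \<Longrightarrow> open U \<Longrightarrow> p \<in> U \<Longrightarrow> F differentiable (at p)"
  unfolding smooth_on_iff_iter_differentiable_on
  by (metis iter_differentiable_on.simps(1) differentiable_on_eq_differentiable_at)

lemma smooth_on_cong:
  assumes "open U" "\<And>q. q \<in> U \<Longrightarrow> F q = G q" "smooth_on U F"
  shows "smooth_on U G"
  using assms(3) iter_differentiable_on_cong[of U F G, OF assms(1,2)]
  unfolding smooth_on_iff_iter_differentiable_on by blast

lemma smooth_on_const: "smooth_on U (\<lambda>q. c)"
  unfolding smooth_on_def
proof
  fix vs :: "'a list"
  show "fold dderiv vs (\<lambda>q. c) differentiable_on U"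
    by (induction vs arbitrary: c) (simp_all add: dderiv_def)
qed

lemma smooth_on_add:
  assumes "open U" "smooth_on U F" "smooth_on U G"
  shows "smooth_on U (\<lambda>q. F q + G q)"
  using assms(2,3) iter_differentiable_on_add[OF assms(1)]
  unfolding smooth_on_iff_iter_differentiable_on by blast

lemma smooth_on_bilinear:
  assumes "open U" "bounded_bilinear pr" "smooth_on U F" "smooth_on U G"
  shows "smooth_on U (\<lambda>q. pr (F q) (G q))"
  using assms(3,4) iter_differentiable_on_bilinear[OF assms(1,2)]
  unfolding smooth_on_iff_iter_differentiable_on by blast

lemma smooth_on_scaleR:
  "open U \<Longrightarrow> smooth_on U F \<Longrightarrow> smooth_on U G \<Longrightarrow> smooth_on U (\<lambda>q. F q *\<^sub>R G q)"
  by (rule smooth_on_bilinear[OF _ bounded_bilinear_scaleR])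

lemma smooth_on_inner:
  "open U \<Longrightarrow> smooth_on U F \<Longrightarrow> smooth_on U G \<Longrightarrow> smooth_on U (\<lambda>q. F q \<bullet> G q)"
  by (rule smooth_on_bilinear[OF _ bounded_bilinear_inner])

lemma smooth_on_diff:
  assumes "open U" "smooth_on U F" "smooth_on U G"
  shows "smooth_on U (\<lambda>q. F q - G q)"
  using smooth_on_add[OF assms(1,2) smooth_on_scaleR[OF assms(1) smooth_on_const assms(3)], of "-1"]
  by simp

lemma smooth_on_sum:
  assumes "open U" "finite S" "\<And>i. i \<in> S \<Longrightarrow> smooth_on U (F i)"
  shows "smooth_on U (\<lambda>q. \<Sum>i\<in>S. F i q)"
  using assms(2,3)
  by (induction S rule: finite_induct) (simp_all add: smooth_on_const smooth_on_add[OF assms(1)])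

lemma smooth_on_sum_Basis_coords:
  assumes "open U" "smooth_on U X" "\<And>b. b \<in> Basis \<Longrightarrow> smooth_on U (F b)"
  shows "smooth_on U (\<lambda>q. \<Sum>b\<in>Basis. (X q \<bullet> b) *\<^sub>R F b q)"
  using assms by (intro smooth_on_sum smooth_on_scaleR smooth_on_inner smooth_on_const) auto

lemma smooth_on_endo_apply:
  assumes U: "open U" and A: "smooth_endo U A" and X: "smooth_on U X"
  shows "smooth_on U (\<lambda>q. A q (X q))"
proof (rule smooth_on_cong[OF U _ smooth_on_sum_Basis_coords[OF U X]])
  show "smooth_on U (\<lambda>q. A q b)" for b
    using A unfolding smooth_endo_def by blast
  show "(\<Sum>b\<in>Basis. (X q \<bullet> b) *\<^sub>R A q b) = A q (X q)" if "q \<in> U" for q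
  proof -
    have "linear (A q)" using A that unfolding smooth_endo_def by blast
    then show ?thesis by (rule linear_eq_sum_Basis[symmetric])
  qed
qed

lemma smooth_on_lie:
  assumes U: "open U" and X: "smooth_on U X" and Y: "smooth_on U Y"
  shows "smooth_on U (lie X Y)"
proof -
  have deriv_eq: "frechet_derivative Z (at q) (W q) = (\<Sum>b\<in>Basis. (W q \<bullet> b) *\<^sub>R dderiv b Z q)"
    if "q \<in> U" "smooth_on U Z" for Z W :: "'a \<Rightarrow> 'a" and q
    using linear_eq_sum_Basis[OF linear_frechet_derivative[OF smooth_on_imp_differentiable_at[OF that(2) U that(1)]]]
    unfolding dderiv_def .
  have "smooth_on U (\<lambda>q. (\<Sum>b\<in>Basis. (X q \<bullet> b) *\<^sub>R dderiv b Y q) - (\<Sum>b\<in>Basis. (Y q \<bullet> b) *\<^sub>R dderiv b X q))"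
    using U X Y by (intro smooth_on_diff smooth_on_sum_Basis_coords smooth_on_dderiv)
  then show ?thesis
    by (rule smooth_on_cong[OF U, rotated]) (simp add: lie_def deriv_eq X Y)
qed

section \<open>Symmetry of second derivatives\<close>

definition second_difference :: "('a::real_vector \<Rightarrow> real) \<Rightarrow> 'a \<Rightarrow> 'a \<Rightarrow> 'a \<Rightarrow> real \<Rightarrow> real" where
  "second_difference \<phi> p u v t = \<phi> (p + t *\<^sub>R u + t *\<^sub>R v) - \<phi> (p + t *\<^sub>R u) - \<phi> (p + t *\<^sub>R v) + \<phi> p"

lemma second_difference_commute: "second_difference \<phi> p u v = second_difference \<phi> p v u"
  unfolding second_difference_def by (intro ext) (simp add: algebra_simps)

lemma second_difference_mean_value:
  fixes \<phi> :: "'a::euclidean_space \<Rightarrow> real"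
  assumes t: "0 < t"
    and diff: "\<And>s c. 0 \<le> s \<Longrightarrow> s \<le> t \<Longrightarrow> c \<in> {0, t} \<Longrightarrow> \<phi> differentiable (at (p + s *\<^sub>R u + c *\<^sub>R v))"
  obtains \<xi> where "0 < \<xi>" "\<xi> < t"
    "second_difference \<phi> p u v t = t * (dderiv u \<phi> (p + \<xi> *\<^sub>R u + t *\<^sub>R v) - dderiv u \<phi> (p + \<xi> *\<^sub>R u))"
proof -
  define G where "G s = \<phi> (p + s *\<^sub>R u + t *\<^sub>R v) - \<phi> (p + s *\<^sub>R u + 0 *\<^sub>R v)" for s
  have line: "((\<lambda>s. \<phi> (p + s *\<^sub>R u + c *\<^sub>R v)) has_derivative (\<lambda>h. h * dderiv u \<phi> (p + s *\<^sub>R u + c *\<^sub>R v)))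
      (at s within {0..t})" if "0 \<le> s" "s \<le> t" "c \<in> {0, t}" for s c
  proof -
    let ?q = "p + s *\<^sub>R u + c *\<^sub>R v"
    have "((\<lambda>s. p + s *\<^sub>R u + c *\<^sub>R v) has_derivative (\<lambda>h. h *\<^sub>R u)) (at s within {0..t})"
      by (auto intro!: derivative_eq_intros)
    moreover have "(\<phi> has_derivative frechet_derivative \<phi> (at ?q)) (at ?q)"
      using diff[OF that] frechet_derivative_works by blast
    ultimately have "((\<lambda>s. \<phi> (p + s *\<^sub>R u + c *\<^sub>R v)) has_derivative (\<lambda>h. frechet_derivative \<phi> (at ?q) (h *\<^sub>R u)))
        (at s within {0..t})"
      by (rule has_derivative_compose)
    moreover have "frechet_derivative \<phi> (at ?q) (h *\<^sub>R u) = h * dderiv u \<phi> ?q" for h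
      using linear_cmul[OF linear_frechet_derivative[OF diff[OF that]]] by (simp add: dderiv_def)
    ultimately show ?thesis by simp
  qed
  have "(G has_derivative (\<lambda>h. h * (dderiv u \<phi> (p + s *\<^sub>R u + t *\<^sub>R v) - dderiv u \<phi> (p + s *\<^sub>R u))))
      (at s within {0..t})" if "0 \<le> s" "s \<le> t" for s
  proof -
    have "t \<in> {0, t}" "0 \<in> {0, t}" by simp_all
    from has_derivative_diff[OF line[OF that this(1)] line[OF that this(2)]]
    show ?thesis unfolding G_def by (simp add: algebra_simps)
  qed
  from mvt_simple[OF t this] obtain \<xi> where \<xi>: "\<xi> \<in> {0<..<t}"
    and mv: "G t - G 0 = (t - 0) * (dderiv u \<phi> (p + \<xi> *\<^sub>R u + t *\<^sub>R v) - dderiv u \<phi> (p + \<xi> *\<^sub>R u))"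
    by blast
  show ?thesis
  proof (rule that)
    show "0 < \<xi>" "\<xi> < t" using \<xi> by auto
    show "second_difference \<phi> p u v t
      = t * (dderiv u \<phi> (p + \<xi> *\<^sub>R u + t *\<^sub>R v) - dderiv u \<phi> (p + \<xi> *\<^sub>R u))"
      using mv by (simp add: G_def second_difference_def)
  qed
qed

lemma second_difference_estimate:
  fixes \<phi> :: "'a::euclidean_space \<Rightarrow> real"
  assumes diff: "\<And>q. q \<in> ball p r \<Longrightarrow> \<phi> differentiable (at q)"
    and approx: "\<And>y. norm (y - p) < r \<Longrightarrow> \<bar>dderiv u \<phi> y - dderiv u \<phi> p - L (y - p)\<bar> \<le> e * norm (y - p)"
    and L: "linear L" and e: "0 \<le> e" and t: "0 < t" "t * (norm u + norm v) < r"
  shows "\<bar>second_difference \<phi> p u v t / t\<^sup>2 - L v\<bar> \<le> 2 * e * (norm u + norm v)"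
proof -
  let ?N = "norm u + norm v"
  have small: "norm (s *\<^sub>R u + c *\<^sub>R v) \<le> t * ?N" "norm (s *\<^sub>R u + c *\<^sub>R v) < r"
    if "0 \<le> s" "s \<le> t" "c \<in> {0, t}" for s c
  proof -
    have "norm (s *\<^sub>R u + c *\<^sub>R v) \<le> s * norm u + t * norm v"
      using that t norm_triangle_ineq[of "s *\<^sub>R u" "c *\<^sub>R v"] by auto
    also have "\<dots> \<le> t * ?N"
      using that mult_right_mono[of s t "norm u"] by (simp add: algebra_simps)
    finally show "norm (s *\<^sub>R u + c *\<^sub>R v) \<le> t * ?N" .
    with t show "norm (s *\<^sub>R u + c *\<^sub>R v) < r" by linarith
  qed
  have "\<phi> differentiable (at (p + s *\<^sub>R u + c *\<^sub>R v))" if "0 \<le> s" "s \<le> t" "c \<in> {0, t}" for s c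
  proof (rule diff)
    have "dist (p + (s *\<^sub>R u + c *\<^sub>R v)) p < r" using small(2)[OF that] by (simp add: dist_norm)
    then show "p + s *\<^sub>R u + c *\<^sub>R v \<in> ball p r" by (simp add: dist_commute add.assoc)
  qed
  from second_difference_mean_value[OF t(1) this] obtain \<xi> where \<xi>: "0 < \<xi>" "\<xi> < t"
    and mv: "second_difference \<phi> p u v t
      = t * (dderiv u \<phi> (p + (\<xi> *\<^sub>R u + t *\<^sub>R v)) - dderiv u \<phi> (p + (\<xi> *\<^sub>R u + 0 *\<^sub>R v)))"
    by (auto simp: add.assoc)
  have near: "\<bar>dderiv u \<phi> (p + w) - dderiv u \<phi> p - L w\<bar> \<le> e * (t * ?N)"
    if "w = \<xi> *\<^sub>R u + c *\<^sub>R v" "c \<in> {0, t}" for w c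
  proof -
    have w: "norm w \<le> t * ?N" "norm w < r" using small[of \<xi> c] \<xi> that by auto
    have "e * norm w \<le> e * (t * ?N)" using mult_left_mono[OF w(1) e] .
    then show ?thesis using approx[of "p + w"] w(2) by simp
  qed
  have "L (\<xi> *\<^sub>R u + t *\<^sub>R v) - L (\<xi> *\<^sub>R u + 0 *\<^sub>R v) = t * L v"
    using L by (simp add: linear_add linear_cmul)
  then have "\<bar>(dderiv u \<phi> (p + (\<xi> *\<^sub>R u + t *\<^sub>R v)) - dderiv u \<phi> (p + (\<xi> *\<^sub>R u + 0 *\<^sub>R v))) - t * L v\<bar>
      \<le> 2 * e * (t * ?N)"
    using near[OF refl, of t] near[OF refl, of 0] by simp
  moreover have "second_difference \<phi> p u v t / t\<^sup>2 - L v
      = ((dderiv u \<phi> (p + (\<xi> *\<^sub>R u + t *\<^sub>R v)) - dderiv u \<phi> (p + (\<xi> *\<^sub>R u + 0 *\<^sub>R v))) - t * L v) / t"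
    unfolding mv using t by (simp add: field_simps power2_eq_square)
  ultimately show ?thesis
    using t by (simp add: divide_le_eq mult_ac)
qed

lemma second_difference_tendsto:
  fixes \<phi> :: "'a::euclidean_space \<Rightarrow> real"
  assumes U: "open U" and p: "p \<in> U" and diff: "\<And>q. q \<in> U \<Longrightarrow> \<phi> differentiable (at q)"
    and Du: "(dderiv u \<phi> has_derivative L) (at p)"
  shows "((\<lambda>t. second_difference \<phi> p u v t / t\<^sup>2) \<longlongrightarrow> L v) (at_right 0)"
proof (rule tendstoI)
  fix e :: real
  assume "0 < e"
  define N where "N = norm u + norm v"
  have N: "0 \<le> N" by (simp add: N_def)
  define e' where "e' = e / (4 * (N + 1))"
  have e': "0 < e'" "2 * e' * N < e"
    using \<open>0 < e\<close> N by (simp_all add: e'_def field_simps add_pos_nonneg)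
  obtain d where d: "0 < d"
    and approx: "\<And>y. norm (y - p) < d \<Longrightarrow> \<bar>dderiv u \<phi> y - dderiv u \<phi> p - L (y - p)\<bar> \<le> e' * norm (y - p)"
    using Du e'(1) unfolding has_derivative_at_alt by force
  obtain r0 where r0: "0 < r0" "ball p r0 \<subseteq> U" using U p open_contains_ball by blast
  define r where "r = min d r0"
  have "\<bar>second_difference \<phi> p u v t / t\<^sup>2 - L v\<bar> < e" if t: "0 < t" "t < r / (N + 1)" for t
  proof -
    have "t * N < r"
      using t N by (simp add: pos_less_divide_eq distrib_left)
    moreover have "\<phi> differentiable (at q)" if "q \<in> ball p r" for q
      using diff r0 that by (auto simp: r_def)
    moreover have "\<bar>dderiv u \<phi> y - dderiv u \<phi> p - L (y - p)\<bar> \<le> e' * norm (y - p)"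
      if "norm (y - p) < r" for y
      using approx that by (simp add: r_def)
    ultimately have "\<bar>second_difference \<phi> p u v t / t\<^sup>2 - L v\<bar> \<le> 2 * e' * N"
      using second_difference_estimate[of p r \<phi> u L e' t v] has_derivative_linear[OF Du] e'(1) t(1)
      by (simp add: N_def)
    with e'(2) show ?thesis by linarith
  qed
  moreover have "0 < r / (N + 1)" using d r0 N by (simp add: r_def)
  ultimately show "\<forall>\<^sub>F t in at_right 0. dist (second_difference \<phi> p u v t / t\<^sup>2) (L v) < e"
    unfolding eventually_at_right_field dist_real_def by blast
qed

lemma dderiv_commute:
  fixes \<phi> :: "'a::euclidean_space \<Rightarrow> real"
  assumes U: "open U" and p: "p \<in> U" and diff: "\<And>q. q \<in> U \<Longrightarrow> \<phi> differentiable (at q)"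
    and Du: "dderiv u \<phi> differentiable (at p)" and Dv: "dderiv v \<phi> differentiable (at p)"
  shows "dderiv v (dderiv u \<phi>) p = dderiv u (dderiv v \<phi>) p"
proof -
  have "((\<lambda>t. second_difference \<phi> p u v t / t\<^sup>2) \<longlongrightarrow> dderiv v (dderiv u \<phi>) p) (at_right 0)"
    using second_difference_tendsto[OF U p diff Du[unfolded frechet_derivative_works]]
    by (simp add: dderiv_def)
  moreover have "((\<lambda>t. second_difference \<phi> p u v t / t\<^sup>2) \<longlongrightarrow> dderiv u (dderiv v \<phi>) p) (at_right 0)"
    using second_difference_tendsto[OF U p diff Dv[unfolded frechet_derivative_works]]
    by (simp add: dderiv_def second_difference_commute)
  ultimately show ?thesis
    using tendsto_unique[OF trivial_limit_at_right_real] by blast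
qed

lemma has_derivative_frechet_derivative_field:
  fixes \<phi> :: "'a::euclidean_space \<Rightarrow> real"
  assumes U: "open U" and p: "p \<in> U" and diff: "\<And>q. q \<in> U \<Longrightarrow> \<phi> differentiable (at q)"
    and diff2: "\<And>w. dderiv w \<phi> differentiable (at p)"
    and Y: "(Y has_derivative DY) (at p)"
  shows "((\<lambda>q. frechet_derivative \<phi> (at q) (Y q)) has_derivative
           (\<lambda>h. frechet_derivative \<phi> (at p) (DY h) + dderiv (Y p) (dderiv h \<phi>) p)) (at p)"
proof -
  have Db: "(dderiv b \<phi> has_derivative (\<lambda>h. dderiv h (dderiv b \<phi>) p)) (at p)" for b
    unfolding dderiv_def[of _ "dderiv b \<phi>"] by (simp add: frechet_derivative_works[THEN iffD1, OF diff2])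
  have "((\<lambda>q. \<Sum>b\<in>Basis. (Y q \<bullet> b) * dderiv b \<phi> q) has_derivative
         (\<lambda>h. \<Sum>b\<in>Basis. (Y p \<bullet> b) * dderiv h (dderiv b \<phi>) p + (DY h \<bullet> b) * dderiv b \<phi> p)) (at p)"
    by (intro has_derivative_sum has_derivative_mult has_derivative_inner_left Y Db)
  moreover have "(\<Sum>b\<in>Basis. (Y q \<bullet> b) * dderiv b \<phi> q) = frechet_derivative \<phi> (at q) (Y q)"
    if "q \<in> U" for q
    using linear_eq_sum_Basis[OF linear_frechet_derivative[OF diff[OF that]], of "Y q"]
    by (simp add: dderiv_def)
  ultimately have D: "((\<lambda>q. frechet_derivative \<phi> (at q) (Y q)) has_derivative
         (\<lambda>h. \<Sum>b\<in>Basis. (Y p \<bullet> b) * dderiv h (dderiv b \<phi>) p + (DY h \<bullet> b) * dderiv b \<phi> p)) (at p)"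
    by (rule has_derivative_transform_within_open[OF _ U p])
  have "(\<Sum>b\<in>Basis. (Y p \<bullet> b) * dderiv h (dderiv b \<phi>) p + (DY h \<bullet> b) * dderiv b \<phi> p)
       = frechet_derivative \<phi> (at p) (DY h) + dderiv (Y p) (dderiv h \<phi>) p" for h
  proof -
    have first: "frechet_derivative \<phi> (at p) (DY h) = (\<Sum>b\<in>Basis. (DY h \<bullet> b) * dderiv b \<phi> p)"
      using linear_eq_sum_Basis[OF linear_frechet_derivative[OF diff[OF p]], of "DY h"]
      by (simp add: dderiv_def)
    have second: "dderiv (Y p) (dderiv h \<phi>) p = (\<Sum>b\<in>Basis. (Y p \<bullet> b) * dderiv b (dderiv h \<phi>) p)"
      using linear_eq_sum_Basis[OF linear_frechet_derivative[OF diff2[of h]], of "Y p"]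
      unfolding dderiv_def[of _ "dderiv h \<phi>"] by simp
    have commute: "dderiv h (dderiv b \<phi>) p = dderiv b (dderiv h \<phi>) p" for b
      by (rule dderiv_commute[OF U p diff diff2 diff2])
    show ?thesis unfolding first second commute by (simp add: sum.distrib)
  qed
  with D show ?thesis by simp
qed

lemma frechet_derivative_lie:
  fixes \<phi> :: "'a::euclidean_space \<Rightarrow> real"
  assumes U: "open U" and p: "p \<in> U" and diff: "\<And>q. q \<in> U \<Longrightarrow> \<phi> differentiable (at q)"
    and diff2: "\<And>w. dderiv w \<phi> differentiable (at p)"
    and X: "X differentiable (at p)" and Y: "Y differentiable (at p)"
  shows "frechet_derivative (\<lambda>q. frechet_derivative \<phi> (at q) (Y q)) (at p) (X p)
       - frechet_derivative (\<lambda>q. frechet_derivative \<phi> (at q) (X q)) (at p) (Y p)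
       = frechet_derivative \<phi> (at p) (lie X Y p)"
proof -
  have XY: "frechet_derivative (\<lambda>q. frechet_derivative \<phi> (at q) (Y q)) (at p) (X p)
     = frechet_derivative \<phi> (at p) (frechet_derivative Y (at p) (X p)) + dderiv (Y p) (dderiv (X p) \<phi>) p"
    using dderiv_eq[OF has_derivative_frechet_derivative_field[OF U p diff diff2
        Y[unfolded frechet_derivative_works]], of "X p"]
    by (simp only: dderiv_def)
  have YX: "frechet_derivative (\<lambda>q. frechet_derivative \<phi> (at q) (X q)) (at p) (Y p)
     = frechet_derivative \<phi> (at p) (frechet_derivative X (at p) (Y p)) + dderiv (X p) (dderiv (Y p) \<phi>) p"
    using dderiv_eq[OF has_derivative_frechet_derivative_field[OF U p diff diff2
        X[unfolded frechet_derivative_works]], of "Y p"]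
    by (simp only: dderiv_def)
  have "dderiv (Y p) (dderiv (X p) \<phi>) p = dderiv (X p) (dderiv (Y p) \<phi>) p"
    by (rule dderiv_commute[OF U p diff diff2 diff2])
  then show ?thesis
    unfolding XY YX lie_def linear_diff[OF linear_frechet_derivative[OF diff[OF p]]] by simp
qed

section \<open>The Levi-Civita connection of a chart\<close>

locale riemannian_chart =
  fixes U :: "'a::euclidean_space set" and g :: "'a \<Rightarrow> 'a \<Rightarrow> 'a \<Rightarrow> real"
  assumes open_U: "open U" and metric: "riemannian_metric U g"
begin

lemma bilinear_g: "p \<in> U \<Longrightarrow> bilinear (g p)"
  using metric unfolding riemannian_metric_def by blast

lemma g_sym: "p \<in> U \<Longrightarrow> g p u v = g p v u"
  using metric unfolding riemannian_metric_def by blast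

lemma g_pos: "p \<in> U \<Longrightarrow> u \<noteq> 0 \<Longrightarrow> 0 < g p u u"
  using metric unfolding riemannian_metric_def by blast

lemma g_simps:
  assumes "p \<in> U"
  shows "g p (x + y) z = g p x z + g p y z" "g p z (x + y) = g p z x + g p z y"
    "g p (x - y) z = g p x z - g p y z" "g p z (x - y) = g p z x - g p z y"
    "g p (c *\<^sub>R x) z = c * g p x z" "g p z (c *\<^sub>R x) = c * g p z x"
    "g p (- x) z = - g p x z" "g p z (- x) = - g p z x"
  using bilinear_g[OF assms]
  by (simp_all add: bilinear_ladd bilinear_radd bilinear_lsub bilinear_rsub bilinear_lmul bilinear_rmul
      bilinear_lneg bilinear_rneg)

lemma g_eqI:
  assumes p: "p \<in> U" and eq: "\<And>z. g p w1 z = g p w2 z"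
  shows "w1 = w2"
proof (rule ccontr)
  assume "w1 \<noteq> w2"
  then have "0 < g p (w1 - w2) (w1 - w2)" using g_pos[OF p] by simp
  then show False using eq by (simp add: g_simps[OF p])
qed

lemma g_represents_linear:
  assumes p: "p \<in> U" and L: "linear L"
  obtains w where "\<And>z. g p w z = L z"
proof -
  define T where "T w = (\<Sum>b\<in>Basis. g p w b *\<^sub>R b)" for w
  have T_inner: "T w \<bullet> z = g p w z" for w z
  proof -
    have "linear (g p w)" using bilinear_g[OF p] unfolding bilinear_def by blast
    from linear_eq_sum_Basis[OF this, of z] show ?thesis
      unfolding T_def inner_sum_left inner_scaleR_left by (auto intro!: sum.cong simp: inner_commute)
  qed
  have "linear T"
    by (rule linearI) (simp_all add: T_def g_simps[OF p] scaleR_add_left sum.distrib scaleR_sum_right)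
  moreover have "inj T"
  proof (rule injI)
    fix x y
    assume "T x = T y"
    then show "x = y" by (intro g_eqI[OF p]) (metis T_inner)
  qed
  ultimately have "surj T" by (rule linear_inj_imp_surj)
  then obtain w where w: "T w = (\<Sum>b\<in>Basis. L b *\<^sub>R b)" by (metis surjD)
  have "g p w z = L z" for z
  proof -
    have "g p w z = (\<Sum>b\<in>Basis. L b *\<^sub>R b) \<bullet> z" by (simp only: T_inner[symmetric] w)
    also have "\<dots> = L z"
      using linear_eq_sum_Basis[OF L, of z]
      unfolding inner_sum_left inner_scaleR_left by (auto intro!: sum.cong simp: inner_commute)
    finally show ?thesis .
  qed
  then show ?thesis by (rule that)
qed

lemma g_eq_sum_Basis: "p \<in> U \<Longrightarrow> (\<Sum>i\<in>Basis. \<Sum>j\<in>Basis. (y \<bullet> i) * (z \<bullet> j) * g p i j) = g p y z"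
  by (rule bilinear_eq_sum_Basis[OF bilinear_g, symmetric])

lemma g_differentiable: "p \<in> U \<Longrightarrow> (\<lambda>q. g q u v) differentiable (at p)"
  using smooth_on_imp_differentiable_at open_U metric unfolding riemannian_metric_def by blast

definition dg :: "'a \<Rightarrow> 'a \<Rightarrow> 'a \<Rightarrow> 'a \<Rightarrow> real" where
  "dg p w u v = dderiv w (\<lambda>q. g q u v) p"

lemma has_derivative_g: "p \<in> U \<Longrightarrow> ((\<lambda>q. g q u v) has_derivative (\<lambda>w. dg p w u v)) (at p)"
  unfolding dg_def dderiv_def by (rule g_differentiable[unfolded frechet_derivative_works])

lemma linear_dg: "p \<in> U \<Longrightarrow> linear (\<lambda>w. dg p w u v)"
  using has_derivative_linear[OF has_derivative_g] .

lemma dg_sym: "p \<in> U \<Longrightarrow> dg p w u v = dg p w v u"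
  unfolding dg_def by (rule dderiv_cong_open[OF open_U]) (auto simp: g_sym)

lemma dg_eq_sum_Basis:
  assumes p: "p \<in> U"
  shows "dg p w y z = (\<Sum>i\<in>Basis. \<Sum>j\<in>Basis. (y \<bullet> i) * (z \<bullet> j) * dg p w i j)"
proof -
  have "((\<lambda>q. \<Sum>i\<in>Basis. \<Sum>j\<in>Basis. (y \<bullet> i) * (z \<bullet> j) * g q i j) has_derivative
        (\<lambda>w. \<Sum>i\<in>Basis. \<Sum>j\<in>Basis. (y \<bullet> i) * (z \<bullet> j) * dg p w i j)) (at p)"
    by (intro has_derivative_sum has_derivative_mult_right has_derivative_g p)
  then have "((\<lambda>q. g q y z) has_derivative
        (\<lambda>w. \<Sum>i\<in>Basis. \<Sum>j\<in>Basis. (y \<bullet> i) * (z \<bullet> j) * dg p w i j)) (at p)"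
    by (rule has_derivative_transform_within_open[OF _ open_U p])
      (simp add: g_eq_sum_Basis)
  then show ?thesis unfolding dg_def by (rule dderiv_eq)
qed

lemma bilinear_dg:
  assumes "p \<in> U"
  shows "bilinear (dg p w)"
proof -
  have eq: "dg p w = (\<lambda>y z. \<Sum>i\<in>Basis. \<Sum>j\<in>Basis. (y \<bullet> i) * (z \<bullet> j) * dg p w i j)"
    by (intro ext) (rule dg_eq_sum_Basis[OF assms])
  show ?thesis by (subst eq) (rule bilinear_sum_Basis)
qed

lemma has_derivative_g_fields:
  assumes p: "p \<in> U" and Y: "(Y has_derivative DY) (at p)" and Z: "(Z has_derivative DZ) (at p)"
  shows "((\<lambda>q. g q (Y q) (Z q)) has_derivative
          (\<lambda>w. dg p w (Y p) (Z p) + g p (DY w) (Z p) + g p (Y p) (DZ w))) (at p)"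
proof -
  have "((\<lambda>q. \<Sum>i\<in>Basis. \<Sum>j\<in>Basis. (Y q \<bullet> i) * (Z q \<bullet> j) * g q i j) has_derivative
        (\<lambda>w. \<Sum>i\<in>Basis. \<Sum>j\<in>Basis. (Y p \<bullet> i) * (Z p \<bullet> j) * dg p w i j
             + ((Y p \<bullet> i) * (DZ w \<bullet> j) + (DY w \<bullet> i) * (Z p \<bullet> j)) * g p i j)) (at p)"
    by (intro has_derivative_sum has_derivative_mult has_derivative_inner_left has_derivative_g p Y Z)
  then have "((\<lambda>q. g q (Y q) (Z q)) has_derivative
        (\<lambda>w. \<Sum>i\<in>Basis. \<Sum>j\<in>Basis. (Y p \<bullet> i) * (Z p \<bullet> j) * dg p w i j
             + ((Y p \<bullet> i) * (DZ w \<bullet> j) + (DY w \<bullet> i) * (Z p \<bullet> j)) * g p i j)) (at p)"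
    by (rule has_derivative_transform_within_open[OF _ open_U p])
      (simp add: g_eq_sum_Basis)
  moreover have "(\<Sum>i\<in>Basis. \<Sum>j\<in>Basis. (Y p \<bullet> i) * (Z p \<bullet> j) * dg p w i j
             + ((Y p \<bullet> i) * (DZ w \<bullet> j) + (DY w \<bullet> i) * (Z p \<bullet> j)) * g p i j)
      = dg p w (Y p) (Z p) + g p (DY w) (Z p) + g p (Y p) (DZ w)" for w
    unfolding dg_eq_sum_Basis[OF p, of w "Y p"] g_eq_sum_Basis[OF p, of "DY w" "Z p", symmetric]
      g_eq_sum_Basis[OF p, of "Y p" "DZ w", symmetric]
    by (simp add: sum.distrib algebra_simps)
  ultimately show ?thesis by simp
qed

definition koszul :: "'a \<Rightarrow> 'a \<Rightarrow> 'a \<Rightarrow> 'a \<Rightarrow> real" where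
  "koszul p u v z = (dg p u v z + dg p v u z - dg p z u v) / 2"

lemma linear_koszul:
  assumes p: "p \<in> U"
  shows "linear (koszul p u v)"
proof -
  interpret dir: linear "\<lambda>z. dg p z u v" by (rule linear_dg[OF p])
  show ?thesis
    by (rule linearI) (simp_all add: koszul_def dir.add dir.scale bilinear_radd bilinear_rmul
        bilinear_dg[OF p] field_simps)
qed

lemma g_christoffel:
  assumes p: "p \<in> U"
  shows "g p (christoffel g p u v) z = koszul p u v z"
proof -
  obtain w where w: "\<And>z. g p w z = koszul p u v z"
    using g_represents_linear[OF p linear_koszul[OF p]] by blast
  have ex1: "\<exists>!w. \<forall>z. g p w z = koszul p u v z"
  proof (rule ex1I[of _ w])
    show "\<forall>z. g p w z = koszul p u v z" using w by blast
    show "w' = w" if "\<forall>z. g p w' z = koszul p u v z" for w'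
      using that w by (intro g_eqI[OF p]) simp
  qed
  have "christoffel g p u v = (THE w. \<forall>z. g p w z = koszul p u v z)"
    unfolding christoffel_def koszul_def dg_def ..
  with theI'[OF ex1] show ?thesis by simp
qed

lemma christoffel_sym:
  assumes p: "p \<in> U"
  shows "christoffel g p u v = christoffel g p v u"
proof (rule g_eqI[OF p])
  fix z
  have "dg p z u v = dg p z v u" by (rule dg_sym[OF p])
  then show "g p (christoffel g p u v) z = g p (christoffel g p v u) z"
    by (simp add: g_christoffel[OF p] koszul_def)
qed

lemma linear_christoffel:
  assumes p: "p \<in> U"
  shows "linear (christoffel g p u)"
proof -
  interpret dir: linear "\<lambda>w. dg p w u z" for z by (rule linear_dg[OF p])
  show ?thesis
    by (rule linearI; rule g_eqI[OF p])
      (simp_all add: g_christoffel[OF p] g_simps[OF p] koszul_def dir.add dir.scale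
        bilinear_ladd bilinear_radd bilinear_lmul bilinear_rmul bilinear_dg[OF p] field_simps)
qed

lemma christoffel_compatible:
  "p \<in> U \<Longrightarrow> g p (christoffel g p x y) z + g p y (christoffel g p x z) = dg p x y z"
  by (simp add: g_sym[of p y] g_christoffel koszul_def dg_sym[of p _ z y] field_simps)

lemma nabla_eq:
  assumes "(V has_derivative DV) (at p)"
  shows "nabla g X V p = DV (X p) + christoffel g p (X p) (V p)"
  using frechet_derivative_at[OF assms] by (simp add: nabla_def)

lemma nabla_cong:
  assumes "p \<in> U" "\<And>q. q \<in> U \<Longrightarrow> V q = W q"
  shows "nabla g X V p = nabla g X W p"
  using frechet_derivative_cong_open[OF open_U assms] assms by (simp add: nabla_def)

lemma nabla_diff:
  assumes p: "p \<in> U" and "V differentiable (at p)" "W differentiable (at p)"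
  shows "nabla g X (\<lambda>q. V q - W q) p = nabla g X V p - nabla g X W p"
  using nabla_eq[OF has_derivative_diff[OF assms(2,3)[unfolded frechet_derivative_works]]]
    linear_diff[OF linear_christoffel[OF p]]
  by (simp add: nabla_def algebra_simps)

lemma nabla_minus:
  assumes p: "p \<in> U" and "V differentiable (at p)"
  shows "nabla g X (\<lambda>q. - V q) p = - nabla g X V p"
  using nabla_eq[OF has_derivative_minus[OF assms(2)[unfolded frechet_derivative_works]]]
    linear_neg[OF linear_christoffel[OF p]]
  by (simp add: nabla_def algebra_simps)

lemma nabla_scaleR:
  assumes p: "p \<in> U" and "h differentiable (at p)" "V differentiable (at p)"
  shows "nabla g X (\<lambda>q. h q *\<^sub>R V q) p
    = frechet_derivative h (at p) (X p) *\<^sub>R V p + h p *\<^sub>R nabla g X V p"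
  using nabla_eq[OF has_derivative_scaleR[OF assms(2,3)[unfolded frechet_derivative_works]]]
    linear_cmul[OF linear_christoffel[OF p]]
  by (simp add: nabla_def algebra_simps)

lemma has_derivative_g_nabla:
  assumes p: "p \<in> U" and Y: "Y differentiable (at p)" and Z: "Z differentiable (at p)"
  shows "((\<lambda>q. g q (Y q) (Z q)) has_derivative
          (\<lambda>w. g p (nabla g (\<lambda>_. w) Y p) (Z p) + g p (Y p) (nabla g (\<lambda>_. w) Z p))) (at p)"
proof -
  have "dg p w (Y p) (Z p) + g p (frechet_derivative Y (at p) w) (Z p) + g p (Y p) (frechet_derivative Z (at p) w)
      = g p (nabla g (\<lambda>_. w) Y p) (Z p) + g p (Y p) (nabla g (\<lambda>_. w) Z p)" for w
    using christoffel_compatible[OF p, of w "Y p" "Z p"] by (simp add: nabla_def g_simps[OF p])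
  with has_derivative_g_fields[OF p Y[unfolded frechet_derivative_works] Z[unfolded frechet_derivative_works]]
  show ?thesis by simp
qed

lemma differentiable_g_fields:
  "p \<in> U \<Longrightarrow> Y differentiable (at p) \<Longrightarrow> Z differentiable (at p) \<Longrightarrow>
   (\<lambda>q. g q (Y q) (Z q)) differentiable (at p)"
  using has_derivative_g_nabla differentiableI by blast

lemma frechet_derivative_g_nabla:
  assumes p: "p \<in> U" and Y: "Y differentiable (at p)" and Z: "Z differentiable (at p)"
  shows "frechet_derivative (\<lambda>q. g q (Y q) (Z q)) (at p) (X p)
    = g p (nabla g X Y p) (Z p) + g p (Y p) (nabla g X Z p)"
  using frechet_derivative_at[OF has_derivative_g_nabla[OF assms], symmetric] by (simp add: nabla_def)

lemma torsion_free: "p \<in> U \<Longrightarrow> nabla g X Y p - nabla g Y X p = lie X Y p"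
  unfolding nabla_def lie_def by (simp add: christoffel_sym[of p "X p"])

lemma nabla_endo_antisym:
  assumes p: "p \<in> U" and A: "linear (A p)"
  shows "nabla_endo g X A Y p - nabla_endo g Y A X p
    = nabla g X (app A Y) p - nabla g Y (app A X) p - A p (lie X Y p)"
  unfolding nabla_endo_def torsion_free[OF p, symmetric] linear_diff[OF A] by simp

lemma curv_eq_of_nabla_factor:
  assumes p: "p \<in> U" and X: "smooth_on U X" and Y: "smooth_on U Y" and A: "smooth_endo U A"
    and B: "linear (B p)"
    and nabla_V: "\<And>Z q. smooth_on U Z \<Longrightarrow> q \<in> U \<Longrightarrow> nabla g Z V q = B q (A q (Z q))"
    and nabla_B: "\<And>Z W. smooth_on U Z \<Longrightarrow> smooth_on U W \<Longrightarrow>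
      nabla g Z (\<lambda>q. B q (W q)) p = B p (nabla g Z W p) + DB (A p (Z p)) (W p)"
  shows "curv g X Y V p = B p (nabla_endo g X A Y p - nabla_endo g Y A X p)
    + DB (A p (X p)) (A p (Y p)) - DB (A p (Y p)) (A p (X p))"
proof -
  have second: "nabla g Z (nabla g W V) p = B p (nabla g Z (app A W) p) + DB (A p (Z p)) (A p (W p))"
    if Z: "smooth_on U Z" and W: "smooth_on U W" for Z W
  proof -
    have "nabla g Z (nabla g W V) p = nabla g Z (\<lambda>q. B q (A q (W q))) p"
      by (rule nabla_cong[OF p]) (rule nabla_V[OF W])
    also have "\<dots> = B p (nabla g Z (app A W) p) + DB (A p (Z p)) (A p (W p))"
      using nabla_B[OF Z smooth_on_endo_apply[OF open_U A W]] by (simp add: app_def)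
    finally show ?thesis .
  qed
  have "linear (A p)" using A p unfolding smooth_endo_def by blast
  moreover have "nabla g (lie X Y) V p = B p (A p (lie X Y p))"
    by (rule nabla_V[OF smooth_on_lie[OF open_U X Y] p])
  ultimately show ?thesis
    unfolding curv_def second[OF X Y] second[OF Y X] nabla_endo_antisym[of p A, OF p \<open>linear (A p)\<close>]
    by (simp add: linear_diff[OF B])
qed

end

section \<open>Almost Hermitian structures with a distinguished vector field\<close>

locale hermitian_eta_structure = riemannian_chart U g for U :: "'a::euclidean_space set" and g +
  fixes J A :: "'a \<Rightarrow> 'a \<Rightarrow> 'a" and eta :: "'a \<Rightarrow> 'a" and f :: "'a \<Rightarrow> real"
  assumes f_def: "f = (\<lambda>p. sqrt (1 - 4 * (sqrt (g p (eta p) (eta p)))\<^sup>2))"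
    and J_smooth: "smooth_endo U J"
    and J_cplx: "\<And>p v. p \<in> U \<Longrightarrow> J p (J p v) = - v"
    and J_orth: "\<And>p u v. p \<in> U \<Longrightarrow> g p (J p u) (J p v) = g p u v"
    and A_smooth: "smooth_endo U A"
    and eta_smooth: "smooth_on U eta"
    and eta_length: "\<And>p. p \<in> U \<Longrightarrow> 0 < sqrt (g p (eta p) (eta p)) \<and> sqrt (g p (eta p) (eta p)) < 1/2"
    and nabla_J: "\<And>X Y p. smooth_on U X \<Longrightarrow> smooth_on U Y \<Longrightarrow> p \<in> U \<Longrightarrow>
      nabla_endo g Y J X p = (4 / (f p - 1)) *\<^sub>R (contr (g p) (X p) (J p (eta p)) (A p (Y p))
                                               + contr (g p) (X p) (eta p) (J p (A p (Y p))))"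
    and nabla_eta: "\<And>X p. smooth_on U X \<Longrightarrow> p \<in> U \<Longrightarrow> nabla g X eta p = f p *\<^sub>R A p (X p)"
begin

lemma eta_norm_bounds: "p \<in> U \<Longrightarrow> 0 < g p (eta p) (eta p) \<and> g p (eta p) (eta p) < 1/4"
  using eta_length[of p] real_sqrt_less_iff[of "g p (eta p) (eta p)" "1/4"]
  by (simp add: real_sqrt_divide)

lemma f_eq: "p \<in> U \<Longrightarrow> f p = sqrt (1 - 4 * g p (eta p) (eta p))"
  using eta_norm_bounds[of p] by (simp add: f_def)

lemma f_bounds: "p \<in> U \<Longrightarrow> 0 < f p \<and> f p < 1"
  using eta_norm_bounds[of p] by (simp add: f_eq)

definition k :: "'a \<Rightarrow> real" where
  "k p = 4 / (f p - 1)"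

lemma k_f: "p \<in> U \<Longrightarrow> k p * (f p - 1) = 4"
  using f_bounds[of p] by (simp add: k_def field_simps)

lemma k_eta_f: "p \<in> U \<Longrightarrow> k p * g p (eta p) (eta p) + f p = -1"
proof -
  assume p: "p \<in> U"
  have "(f p)\<^sup>2 = 1 - 4 * g p (eta p) (eta p)" using eta_norm_bounds[OF p] by (simp add: f_eq[OF p])
  then show ?thesis using f_bounds[OF p] by (simp add: k_def field_simps power2_eq_square)
qed

lemma smooth_on_A_apply: "smooth_on U X \<Longrightarrow> smooth_on U (\<lambda>q. A q (X q))"
  by (rule smooth_on_endo_apply[OF open_U A_smooth])

lemma smooth_on_J_apply: "smooth_on U X \<Longrightarrow> smooth_on U (\<lambda>q. J q (X q))"
  by (rule smooth_on_endo_apply[OF open_U J_smooth])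

lemma linear_A: "p \<in> U \<Longrightarrow> linear (A p)"
  using A_smooth unfolding smooth_endo_def by blast

lemma linear_J: "p \<in> U \<Longrightarrow> linear (J p)"
  using J_smooth unfolding smooth_endo_def by blast

lemma differentiable_at_smooth: "smooth_on U X \<Longrightarrow> p \<in> U \<Longrightarrow> X differentiable (at p)"
  by (rule smooth_on_imp_differentiable_at[OF _ open_U])

lemma has_derivative_f: "p \<in> U \<Longrightarrow> (f has_derivative (\<lambda>w. -4 * g p (A p w) (eta p))) (at p)"
proof -
  assume p: "p \<in> U"
  have eta: "eta differentiable (at p)" by (rule differentiable_at_smooth[OF eta_smooth p])
  have "nabla g (\<lambda>_. w) eta p = f p *\<^sub>R A p w" for w
    using nabla_eta[OF smooth_on_const p] .
  then have "((\<lambda>q. g q (eta q) (eta q)) has_derivative (\<lambda>w. 2 * f p * g p (A p w) (eta p))) (at p)"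
    using has_derivative_g_nabla[OF p eta eta] by (simp add: g_simps[OF p] g_sym[OF p, of "eta p"] mult.assoc)
  then have "((\<lambda>q. sqrt (1 - 4 * g q (eta q) (eta q))) has_derivative
      (\<lambda>w. - (4 * (2 * f p * g p (A p w) (eta p))) * (inverse (sqrt (1 - 4 * g p (eta p) (eta p))) / 2)))
      (at p)"
    using eta_norm_bounds[OF p]
    by (auto intro!: derivative_eq_intros DERIV_compose_FDERIV[OF DERIV_real_sqrt])
  moreover have "- (4 * (2 * f p * c)) * (inverse (sqrt (1 - 4 * g p (eta p) (eta p))) / 2) = -4 * c" for c
    using f_bounds[OF p] by (simp add: f_eq[OF p, symmetric] field_simps)
  ultimately have "((\<lambda>q. sqrt (1 - 4 * g q (eta q) (eta q))) has_derivative
      (\<lambda>w. -4 * g p (A p w) (eta p))) (at p)"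
    by (simp only:)
  then show ?thesis
    by (rule has_derivative_transform_within_open[OF _ open_U p]) (simp add: f_eq)
qed

lemma frechet_derivative_f:
  assumes "p \<in> U"
  shows "frechet_derivative f (at p) w = -4 * g p (A p w) (eta p)"
  using frechet_derivative_at[OF has_derivative_f[OF assms], symmetric] by simp

lemma frechet_derivative_df_field:
  assumes p: "p \<in> U" and X: "smooth_on U X" and Y: "smooth_on U Y"
  shows "frechet_derivative (\<lambda>q. frechet_derivative f (at q) (Y q)) (at p) (X p)
    = -4 * (g p (nabla g X (app A Y) p) (eta p) + f p * g p (A p (Y p)) (A p (X p)))"
proof -
  have AY: "(\<lambda>q. A q (Y q)) differentiable (at p)"
    by (rule differentiable_at_smooth[OF smooth_on_A_apply[OF Y] p])
  have eta: "eta differentiable (at p)" by (rule differentiable_at_smooth[OF eta_smooth p])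
  have "frechet_derivative (\<lambda>q. frechet_derivative f (at q) (Y q)) (at p)
      = frechet_derivative (\<lambda>q. -4 * g q (A q (Y q)) (eta q)) (at p)"
    by (rule frechet_derivative_cong_open[OF open_U p]) (rule frechet_derivative_f)
  also have "\<dots> = (\<lambda>w. -4 * frechet_derivative (\<lambda>q. g q (A q (Y q)) (eta q)) (at p) w)"
    using frechet_derivative_at[OF has_derivative_mult_right[OF
        differentiable_g_fields[OF p AY eta, unfolded frechet_derivative_works]], symmetric] .
  finally show ?thesis
    using frechet_derivative_g_nabla[OF p AY eta, of X] nabla_eta[OF X p]
    by (simp add: app_def g_simps[OF p])
qed

lemma g_nabla_endo_A_eta:
  assumes p: "p \<in> U" and X: "smooth_on U X" and Y: "smooth_on U Y"
  shows "g p (nabla_endo g X A Y p - nabla_endo g Y A X p) (eta p) = 0"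
proof -
  have f_diff: "f differentiable (at q)" if "q \<in> U" for q
    using has_derivative_f[OF that] by (rule differentiableI)
  have "dderiv w f differentiable (at p)" for w
  proof -
    have "smooth_on U (\<lambda>q. A q w)" using A_smooth unfolding smooth_endo_def by blast
    then have "(\<lambda>q. g q (A q w) (eta q)) differentiable (at p)"
      by (intro differentiable_g_fields[OF p] differentiable_at_smooth[OF _ p] eta_smooth)
    then obtain D where "((\<lambda>q. g q (A q w) (eta q)) has_derivative D) (at p)"
      unfolding differentiable_def by blast
    then have "((\<lambda>q. -4 * g q (A q w) (eta q)) has_derivative (\<lambda>h. -4 * D h)) (at p)"
      by (rule has_derivative_mult_right)
    then have "(dderiv w f has_derivative (\<lambda>h. -4 * D h)) (at p)"
      by (rule has_derivative_transform_within_open[OF _ open_U p]) (simp add: dderiv_def frechet_derivative_f)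
    then show ?thesis by (rule differentiableI)
  qed
  from frechet_derivative_lie[OF open_U p f_diff this differentiable_at_smooth[OF X p]
      differentiable_at_smooth[OF Y p]]
  have "g p (nabla g X (app A Y) p) (eta p) - g p (nabla g Y (app A X) p) (eta p)
      = g p (A p (lie X Y p)) (eta p)"
    unfolding frechet_derivative_df_field[OF p X Y] frechet_derivative_df_field[OF p Y X]
      frechet_derivative_f[OF p]
    by (simp add: g_sym[OF p, of "A p (X p)"] algebra_simps)
  then show ?thesis
    by (simp add: nabla_endo_antisym[of p A, OF p linear_A[OF p]] g_simps[OF p])
qed

lemma curv_eta:
  assumes p: "p \<in> U" and X: "smooth_on U X" and Y: "smooth_on U Y"
  shows "curv g X Y eta p = f p *\<^sub>R (nabla_endo g X A Y p - nabla_endo g Y A X p)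
    - 4 *\<^sub>R contr (g p) (eta p) (A p (X p)) (A p (Y p))"
proof -
  have "curv g X Y eta p = f p *\<^sub>R (nabla_endo g X A Y p - nabla_endo g Y A X p)
    + (-4 * g p (A p (X p)) (eta p)) *\<^sub>R A p (Y p) - (-4 * g p (A p (Y p)) (eta p)) *\<^sub>R A p (X p)"
  proof (rule curv_eq_of_nabla_factor[OF p X Y A_smooth, where B = "\<lambda>q v. f q *\<^sub>R v"])
    show "nabla g Z eta q = f q *\<^sub>R A q (Z q)" if "smooth_on U Z" "q \<in> U" for Z q
      using nabla_eta[OF that] .
    show "nabla g Z (\<lambda>q. f q *\<^sub>R W q) p
      = f p *\<^sub>R nabla g Z W p + (-4 * g p (A p (Z p)) (eta p)) *\<^sub>R W p"
      if "smooth_on U Z" "smooth_on U W" for Z W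
      using nabla_scaleR[OF p differentiableI[OF has_derivative_f[OF p]] differentiable_at_smooth[OF that(2) p]]
      by (simp add: frechet_derivative_f[OF p])
  qed simp
  then show ?thesis
    by (simp add: contr_def g_sym[OF p, of "eta p"] algebra_simps)
qed

lemma g_J_skew: "p \<in> U \<Longrightarrow> g p u (J p v) = - g p (J p u) v"
  using J_orth[of p u "J p v"] by (simp add: J_cplx g_simps)

lemma g_self_J: "p \<in> U \<Longrightarrow> g p v (J p v) = 0"
  using g_J_skew[of p v v] g_sym[of p "J p v" v] by simp

(* The hypothesis on nabla J says (nabla_Y J) X = nablaJ (A Y) X. *)
definition nablaJ :: "'a \<Rightarrow> 'a \<Rightarrow> 'a \<Rightarrow> 'a" where
  "nablaJ q a v = k q *\<^sub>R (contr (g q) v (J q (eta q)) a + contr (g q) v (eta q) (J q a))"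

definition nablaJeta :: "'a \<Rightarrow> 'a \<Rightarrow> 'a" where
  "nablaJeta q v = - J q v - (k q * g q (eta q) v) *\<^sub>R J q (eta q) - (k q * g q (eta q) (J q v)) *\<^sub>R eta q"

lemma linear_nablaJeta: "p \<in> U \<Longrightarrow> linear (nablaJeta p)"
  unfolding nablaJeta_def
  by (rule linearI) (simp_all add: linear_add linear_cmul linear_J g_simps algebra_simps)

lemma nabla_J_apply:
  assumes p: "p \<in> U" and X: "smooth_on U X" and V: "smooth_on U V"
  shows "nabla g X (\<lambda>q. J q (V q)) p = nablaJ p (A p (X p)) (V p) + J p (nabla g X V p)"
  using nabla_J[OF V X p] by (simp add: nabla_endo_def app_def nablaJ_def k_def diff_eq_eq)

lemma nabla_Jeta:
  assumes Z: "smooth_on U Z" and q: "q \<in> U"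
  shows "nabla g Z (\<lambda>q. J q (eta q)) q = nablaJeta q (A q (Z q))"
proof -
  let ?a = "A q (Z q)"
  have "nabla g Z (\<lambda>q. J q (eta q)) q
      = k q *\<^sub>R (contr (g q) (eta q) (J q (eta q)) ?a + contr (g q) (eta q) (eta q) (J q ?a)) + f q *\<^sub>R J q ?a"
    using nabla_J_apply[OF q Z eta_smooth] by (simp add: nablaJ_def nabla_eta[OF Z q] linear_cmul[OF linear_J[OF q]])
  also have "\<dots> = (k q * g q (eta q) (eta q) + f q) *\<^sub>R J q ?a
      - (k q * g q (eta q) ?a) *\<^sub>R J q (eta q) - (k q * g q (eta q) (J q ?a)) *\<^sub>R eta q"
    by (simp add: contr_def g_self_J[OF q] algebra_simps)
  finally show ?thesis by (simp add: nablaJeta_def k_eta_f[OF q])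
qed

lemma has_derivative_k: "p \<in> U \<Longrightarrow> (k has_derivative (\<lambda>w. (k p)\<^sup>2 * g p (A p w) (eta p))) (at p)"
proof -
  assume p: "p \<in> U"
  have ne: "f p - 1 \<noteq> 0" using f_bounds[OF p] by simp
  have "((\<lambda>q. 4 / (f q - 1)) has_derivative (\<lambda>w. -4 * g p (A p w) (eta p) * (- 4 / (f p - 1)\<^sup>2))) (at p)"
    using ne by (auto intro!: derivative_eq_intros DERIV_compose_FDERIV has_derivative_f[OF p]
        simp: power2_eq_square)
  moreover have "-4 * c * (- 4 / (f p - 1)\<^sup>2) = (k p)\<^sup>2 * c" for c
    using ne by (simp add: k_def field_simps power2_eq_square)
  ultimately show ?thesis by (simp add: k_def[abs_def])
qed

lemma frechet_derivative_k_g_eta: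
  assumes p: "p \<in> U" and X: "smooth_on U X" and V: "smooth_on U V"
  shows "frechet_derivative (\<lambda>q. k q * g q (eta q) (V q)) (at p) (X p)
    = (k p)\<^sup>2 * g p (A p (X p)) (eta p) * g p (eta p) (V p)
      + k p * (f p * g p (A p (X p)) (V p) + g p (eta p) (nabla g X V p))"
proof -
  have eta: "eta differentiable (at p)" and V': "V differentiable (at p)"
    using differentiable_at_smooth p eta_smooth V by blast+
  have "((\<lambda>q. k q * g q (eta q) (V q)) has_derivative
      (\<lambda>w. k p * frechet_derivative (\<lambda>q. g q (eta q) (V q)) (at p) w
         + (k p)\<^sup>2 * g p (A p w) (eta p) * g p (eta p) (V p))) (at p)"
    by (rule has_derivative_mult[OF has_derivative_k[OF p]
          differentiable_g_fields[OF p eta V', unfolded frechet_derivative_works]])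
  from frechet_derivative_at[OF this, symmetric] show ?thesis
    using frechet_derivative_g_nabla[OF p eta V', of X]
    by (simp add: nabla_eta[OF X p] g_simps[OF p] algebra_simps)
qed

(* With a = A X, nabla2Jeta q a v is (nabla_X nablaJeta) v at q: differentiate the three terms of
   nablaJeta q v using nabla_X J = nablaJ a, X k = k^2 g(a, eta) and nabla_X eta = f a. *)
definition nabla2Jeta :: "'a \<Rightarrow> 'a \<Rightarrow> 'a \<Rightarrow> 'a" where
  "nabla2Jeta q a v = - nablaJ q a v
    - ((k q)\<^sup>2 * g q a (eta q) * g q (eta q) v + k q * f q * g q a v) *\<^sub>R J q (eta q)
    - (k q * g q (eta q) v) *\<^sub>R nablaJeta q a
    - ((k q)\<^sup>2 * g q a (eta q) * g q (eta q) (J q v)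
        + k q * (f q * g q a (J q v) + g q (eta q) (nablaJ q a v))) *\<^sub>R eta q
    - (k q * g q (eta q) (J q v) * f q) *\<^sub>R a"

lemma nabla_nablaJeta:
  assumes p: "p \<in> U" and X: "smooth_on U X" and W: "smooth_on U W"
  shows "nabla g X (\<lambda>q. nablaJeta q (W q)) p
    = nablaJeta p (nabla g X W p) + nabla2Jeta p (A p (X p)) (W p)"
proof -
  let ?a = "A p (X p)" and ?P = "nabla g X W p"
  have JW: "smooth_on U (\<lambda>q. J q (W q))" by (rule smooth_on_J_apply[OF W])
  have diff: "W differentiable (at p)" "eta differentiable (at p)"
      "(\<lambda>q. J q (W q)) differentiable (at p)" "(\<lambda>q. J q (eta q)) differentiable (at p)"
    using differentiable_at_smooth[OF _ p] W eta_smooth JW smooth_on_J_apply[OF eta_smooth] by blast+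
  have k: "k differentiable (at p)" using has_derivative_k[OF p] by (rule differentiableI)
  have coeffs: "(\<lambda>q. k q * g q (eta q) (W q)) differentiable (at p)"
      "(\<lambda>q. k q * g q (eta q) (J q (W q))) differentiable (at p)"
    using differentiable_g_fields[OF p diff(2)] diff(1,3) k by simp_all
  have "nabla g X (\<lambda>q. nablaJeta q (W q)) p
      = - nabla g X (\<lambda>q. J q (W q)) p
        - nabla g X (\<lambda>q. (k q * g q (eta q) (W q)) *\<^sub>R J q (eta q)) p
        - nabla g X (\<lambda>q. (k q * g q (eta q) (J q (W q))) *\<^sub>R eta q) p"
    unfolding nablaJeta_def using diff coeffs
    by (simp add: nabla_diff[OF p] nabla_minus[OF p])
  also have "\<dots> = - (nablaJ p ?a (W p) + J p ?P)
      - (((k p)\<^sup>2 * g p ?a (eta p) * g p (eta p) (W p) + k p * (f p * g p ?a (W p) + g p (eta p) ?P))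
            *\<^sub>R J p (eta p) + (k p * g p (eta p) (W p)) *\<^sub>R nablaJeta p ?a)
      - (((k p)\<^sup>2 * g p ?a (eta p) * g p (eta p) (J p (W p))
            + k p * (f p * g p ?a (J p (W p)) + g p (eta p) (nablaJ p ?a (W p) + J p ?P)))
            *\<^sub>R eta p + (k p * g p (eta p) (J p (W p))) *\<^sub>R (f p *\<^sub>R ?a))"
    using diff coeffs
    by (simp add: nabla_J_apply[OF p X] nabla_J_apply[OF p X W] nabla_scaleR[OF p] nabla_Jeta[OF X p]
        nabla_eta[OF X p] frechet_derivative_k_g_eta[OF p X] W JW)
  also have "\<dots> = nablaJeta p ?P + nabla2Jeta p ?a (W p)"
    by (simp add: nablaJeta_def nabla2Jeta_def g_simps[OF p] algebra_simps)
  finally show ?thesis .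
qed

lemma nablaJeta_orthogonal:
  assumes p: "p \<in> U" and C: "g p C (eta p) = 0"
  shows "nablaJeta p C = - J p C + (k p * g p C (J p (eta p))) *\<^sub>R eta p"
  using C g_J_skew[OF p, of "eta p" C] g_sym[OF p, of "J p (eta p)" C] g_sym[OF p, of C "eta p"]
  by (simp add: nablaJeta_def)

lemma nabla2Jeta_antisym:
  assumes p: "p \<in> U"
  shows "nabla2Jeta p a b - nabla2Jeta p b a = - 4 *\<^sub>R contr (g p) (J p (eta p)) a b"
proof -
  interpret J: linear "J p" by (rule linear_J[OF p])
  let ?e = "eta p" and ?k = "k p" and ?f = "f p"
  have Jsym: "g p u (J p v) = - g p v (J p u)" for u v
    using g_J_skew[OF p, of u v] g_sym[OF p, of "J p u" v] by simp
  have sym: "g p b a = g p a b" "g p a ?e = g p ?e a" "g p b ?e = g p ?e b"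
    "g p (J p ?e) a = - g p ?e (J p a)" "g p (J p ?e) b = - g p ?e (J p b)"
    using g_sym[OF p] g_J_skew[OF p] Jsym by metis+
  have "nabla2Jeta p a b - nabla2Jeta p b a
      = (?k * (1 - ?f) * g p ?e (J p b)) *\<^sub>R a - (?k * (1 - ?f) * g p ?e (J p a)) *\<^sub>R b
        + (?k * (- 1 - ?f - ?k * g p ?e ?e) * g p a (J p b)) *\<^sub>R ?e
        + (?k * (- 1 - ?f - ?k * g p ?e ?e) * g p a (J p b)) *\<^sub>R ?e"
    unfolding nabla2Jeta_def nablaJeta_def nablaJ_def contr_def
    by (simp add: J.add J.diff J.scale J.neg J_cplx[OF p] g_simps[OF p] g_self_J[OF p] sym
        Jsym[of b a] Jsym[of a ?e] Jsym[of b ?e] algebra_simps power2_eq_square)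
  also have "\<dots> = - 4 *\<^sub>R contr (g p) (J p (eta p)) a b"
    using k_f[OF p] k_eta_f[OF p] by (simp add: contr_def sym algebra_simps)
  finally show ?thesis .
qed

lemma curv_Jeta:
  assumes p: "p \<in> U" and X: "smooth_on U X" and Y: "smooth_on U Y"
  shows "curv g X Y (app J eta) p =
    - J p (nabla_endo g X A Y p - nabla_endo g Y A X p)
    + (4 / (f p - 1) * g p (nabla_endo g X A Y p - nabla_endo g Y A X p) (J p (eta p))) *\<^sub>R eta p
    - 4 *\<^sub>R contr (g p) (J p (eta p)) (A p (X p)) (A p (Y p))"
proof -
  have "curv g X Y (app J eta) p = nablaJeta p (nabla_endo g X A Y p - nabla_endo g Y A X p)
    + (nabla2Jeta p (A p (X p)) (A p (Y p)) - nabla2Jeta p (A p (Y p)) (A p (X p)))"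
    unfolding add_diff_eq
  proof (rule curv_eq_of_nabla_factor[where B = nablaJeta, OF p X Y A_smooth linear_nablaJeta[OF p]])
    show "nabla g Z (app J eta) q = nablaJeta q (A q (Z q))" if "smooth_on U Z" "q \<in> U" for Z q
      using nabla_Jeta[OF that] by (simp add: app_def)
  qed (rule nabla_nablaJeta[OF p])
  then show ?thesis
    unfolding nablaJeta_orthogonal[OF p g_nabla_endo_A_eta[OF p X Y]] nabla2Jeta_antisym[OF p]
    by (simp add: k_def)
qed

end

theorem lemma5p2:
  fixes U :: "'a::euclidean_space set"
    and g :: "'a \<Rightarrow> 'a \<Rightarrow> 'a \<Rightarrow> real"
    and J A :: "'a \<Rightarrow> 'a \<Rightarrow> 'a"
    and eta :: "'a \<Rightarrow> 'a"
  defines "rho \<equiv> (\<lambda>p. sqrt (g p (eta p) (eta p)))"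
  defines "f \<equiv> (\<lambda>p. sqrt (1 - 4 * (rho p)\<^sup>2))"
  defines "C \<equiv> (\<lambda>X Y p. nabla_endo g X A Y p - nabla_endo g Y A X p)"
  assumes dim: "DIM('a) = 4"
    and U: "open U"
    and metric: "riemannian_metric U g"
    and J_smooth: "smooth_endo U J"
    and J_cplx: "\<forall>p\<in>U. \<forall>v. J p (J p v) = - v"
    and J_orth: "\<forall>p\<in>U. \<forall>u v. g p (J p u) (J p v) = g p u v"
    and A_smooth: "smooth_endo U A"
    and A_skew: "\<forall>p\<in>U. \<forall>u v. g p (A p u) v = - g p u (A p v)"
    and eta_smooth: "smooth_vf U eta"
    and rho_bounds: "\<forall>p\<in>U. 0 < rho p \<and> rho p < 1/2"
    and hypJ: "\<forall>X Y. smooth_vf U X \<longrightarrow> smooth_vf U Y \<longrightarrow> (\<forall>p\<in>U.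
        nabla_endo g Y J X p =
          (4 / (f p - 1)) *\<^sub>R (contr (g p) (X p) (J p (eta p)) (A p (Y p))
                               + contr (g p) (X p) (eta p) (J p (A p (Y p)))))"
    and hypEta: "\<forall>X. smooth_vf U X \<longrightarrow> (\<forall>p\<in>U. nabla g X eta p = f p *\<^sub>R A p (X p))"
  shows "\<forall>X Y. smooth_vf U X \<longrightarrow> smooth_vf U Y \<longrightarrow> (\<forall>p\<in>U.
        g p (C X Y p) (eta p) = 0
      \<and> curv g X Y eta p = f p *\<^sub>R C X Y p - 4 *\<^sub>R contr (g p) (eta p) (A p (X p)) (A p (Y p))
      \<and> curv g X Y (app J eta) p =
          - J p (C X Y p) + (4 / (f p - 1) * g p (C X Y p) (J p (eta p))) *\<^sub>R eta p
          - 4 *\<^sub>R contr (g p) (J p (eta p)) (A p (X p)) (A p (Y p)))"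
proof -
  interpret hermitian_eta_structure U g J A eta f
  proof
    show "f = (\<lambda>p. sqrt (1 - 4 * (sqrt (g p (eta p) (eta p)))\<^sup>2))"
      unfolding f_def rho_def ..
  qed (use U metric J_smooth J_cplx J_orth A_smooth eta_smooth rho_bounds hypJ hypEta in
      \<open>auto simp: smooth_vf_def rho_def\<close>)
  show ?thesis
    unfolding C_def smooth_vf_def using g_nabla_endo_A_eta curv_eta curv_Jeta by blast
qed

end
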